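(* If $T$ is any bounded linear operator on a separable Banach space $X$, then the set $FHC(T)$ of frequently hypercyclic vectors for $T$ is meager in $X$.
   Context: $x\in FHC(T)$ if for every nonempty open $V\subset X$, $\liminf_{N\to\infty}\frac1N\#\{n\in[1,N]:T^nx\in V\}>0$. *)

theory Defs
  imports "HOL-Analysis.Analysis"
begin

definition nowhere_dense :: "'a::topological_space set \<Rightarrow> bool" where
  "nowhere_dense A \<longleftrightarrow> interior (closure A) = {}"

definition meager :: "'a::topological_space set \<Rightarrow> bool" where
  "meager S \<longleftrightarrow> (\<exists>\<F>. countable \<F> \<and> (\<forall>A\<in>\<F>. nowhere_dense A) \<and> S \<subseteq> \<Union>\<F>)"

definition FHC :: "('a::topological_space \<Rightarrow> 'a) \<Rightarrow> 'a set" where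
  "FHC T = {x. \<forall>V. open V \<and> V \<noteq> {} \<longrightarrow>
     liminf (\<lambda>N::nat. ereal (real (card {n\<in>{1..N}. (T ^^ n) x \<in> V}) / real N)) > 0}"

end

theory Submission
  imports Defs
begin

text \<open>A frequently hypercyclic vector visits every ball with positive lower density, so
  \<open>FHC T\<close> lies in the countable union of the closed sets \<open>frequent_visit_set T F j m\<close> of
  points whose orbit visits \<open>F = cball a (1/3)\<close>, \<open>norm a = 1\<close>, with density at least
  \<open>1 / (j + 1)\<close> on every \<open>[1, N]\<close> with \<open>N \<ge> m\<close>. If one of them had an interior point,
  then, since the orbit of any \<open>x \<in> FHC T\<close> is dense, every orbit of \<open>3^i x\<close> with
  \<open>i < 2 (j + 1)\<close> would enter that interior. But \<open>T^n (3^i x) \<in> F\<close> pins \<open>norm (T^n x)\<close> to \<open>[2/3^(i+1), 4/3^(i+1)]\<close>, so these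
  orbits visit \<open>F\<close> at pairwise disjoint times, and \<open>2 (j + 1)\<close> disjoint sets of density
  \<open>1 / (j + 1)\<close> do not fit into \<open>[1, N]\<close>.\<close>

lemma continuous_on_funpow:
  fixes f :: "'a::topological_space \<Rightarrow> 'a"
  assumes "continuous_on UNIV f"
  shows "continuous_on UNIV (f ^^ n)"
proof (induction n)
  case (Suc n)
  then show ?case
    using continuous_on_compose[OF Suc.IH continuous_on_subset[OF assms]] by simp
qed (simp add: continuous_on_id)

lemma bounded_linear_funpow:
  fixes T :: "'a::real_normed_vector \<Rightarrow> 'a"
  shows "bounded_linear T \<Longrightarrow> bounded_linear (T ^^ n)"
  by (induction n) (auto simp: id_def comp_def intro: bounded_linear_ident bounded_linear_compose)

lemma funpow_scaleR:
  fixes T :: "'a::real_normed_vector \<Rightarrow> 'a"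
  assumes "bounded_linear T"
  shows "(T ^^ n) (c *\<^sub>R x) = c *\<^sub>R (T ^^ n) x"
  using bounded_linear_funpow[OF assms, of n] by (simp add: linear_simps)

lemma meagerI:
  assumes "countable \<F>" "\<And>A. A \<in> \<F> \<Longrightarrow> closed A" "\<And>A. A \<in> \<F> \<Longrightarrow> interior A = {}"
    and "S \<subseteq> \<Union>\<F>"
  shows "meager S"
  unfolding meager_def nowhere_dense_def using assms by (auto simp: closure_closed)

lemma sum_card_disjoint_le:
  assumes "finite S" "\<And>i. i \<in> I \<Longrightarrow> H i \<subseteq> S" "finite I"
    and "\<And>i l. i \<in> I \<Longrightarrow> l \<in> I \<Longrightarrow> i \<noteq> l \<Longrightarrow> H i \<inter> H l = {}"
  shows "(\<Sum>i\<in>I. card (H i)) \<le> card S"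
proof -
  have "(\<Sum>i\<in>I. card (H i)) = card (\<Union>i\<in>I. H i)"
    using assms by (intro card_UN_disjoint[symmetric]) (auto intro: finite_subset)
  also have "\<dots> \<le> card S"
    using assms by (intro card_mono) auto
  finally show ?thesis .
qed

definition visits :: "('a \<Rightarrow> 'a) \<Rightarrow> 'a \<Rightarrow> 'a set \<Rightarrow> nat \<Rightarrow> nat set" where
  "visits T x F N = {n \<in> {1..N}. (T ^^ n) x \<in> F}"

lemma finite_visits [simp]: "finite (visits T x F N)"
  by (simp add: visits_def)

lemma visits_subset: "visits T x F N \<subseteq> {1..N}"
  by (auto simp: visits_def)

lemma visits_mono: "F \<subseteq> G \<Longrightarrow> visits T x F N \<subseteq> visits T x G N"
  by (auto simp: visits_def)

lemma card_visits_funpow_le: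
  assumes "k \<le> d"
  shows "card (visits T ((T ^^ k) x) F N) \<le> card (visits T x F (N + d))"
proof -
  have "card (visits T ((T ^^ k) x) F N) = card ((\<lambda>n. n + k) ` visits T ((T ^^ k) x) F N)"
    by (simp add: card_image)
  also have "\<dots> \<le> card (visits T x F (N + d))"
    using assms by (intro card_mono) (auto simp: visits_def funpow_add)
  finally show ?thesis .
qed

lemma eventually_visits_subset:
  assumes "continuous_on UNIV T" "closed F"
  shows "eventually (\<lambda>y'. visits T y' F N \<subseteq> visits T y F N) (nhds y)"
proof -
  have "eventually (\<lambda>y'. (T ^^ n) y' \<notin> F) (nhds y)" if "(T ^^ n) y \<notin> F" for n
    using that eventually_nhds_in_open[OF open_vimage[OF open_Compl[OF assms(2)]
        continuous_on_funpow[OF assms(1)]], of y n]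
    by simp
  then have "eventually (\<lambda>y'. \<forall>n \<in> {1..N} - visits T y F N. (T ^^ n) y' \<notin> F) (nhds y)"
    by (subst eventually_ball_finite) (auto simp: visits_def)
  then show ?thesis
    by eventually_elim (auto simp: visits_def)
qed

lemma closed_visit_count:
  assumes "continuous_on UNIV T" "closed F" and P: "\<And>k k'. P k \<Longrightarrow> k \<le> k' \<Longrightarrow> P k'"
  shows "closed {y. P (card (visits T y F N))}"
  unfolding closed_def
proof (subst open_subopen, intro ballI)
  fix y assume y: "y \<in> - {y. P (card (visits T y F N))}"
  obtain U where U: "open U" "y \<in> U" "\<And>y'. y' \<in> U \<Longrightarrow> visits T y' F N \<subseteq> visits T y F N"
    using eventually_visits_subset[OF assms(1,2), of N y] unfolding eventually_nhds by blast
  have "\<not> P (card (visits T y' F N))" if "y' \<in> U" for y'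
    using y P[OF _ card_mono[OF finite_visits U(3)[OF that]]] by blast
  with U(1,2) show "\<exists>U. open U \<and> y \<in> U \<and> U \<subseteq> - {y. P (card (visits T y F N))}"
    by blast
qed

definition frequent_visit_set :: "('a \<Rightarrow> 'a) \<Rightarrow> 'a set \<Rightarrow> nat \<Rightarrow> nat \<Rightarrow> 'a set" where
  "frequent_visit_set T F j m =
     {y. \<forall>N\<ge>m. real N \<le> real (Suc j) * real (card (visits T y F N))}"

lemma closed_frequent_visit_set:
  assumes "continuous_on UNIV T" "closed F"
  shows "closed (frequent_visit_set T F j m)"
proof -
  have "closed {y. m \<le> N \<longrightarrow> real N \<le> real (Suc j) * real (card (visits T y F N))}" for N
    by (rule closed_visit_count[OF assms])
      (meson mult_left_mono of_nat_0_le_iff of_nat_mono order_trans)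
  then show ?thesis
    unfolding frequent_visit_set_def by (intro closed_Collect_all) simp
qed

lemma frequent_visit_set_mono:
  assumes "F \<subseteq> G"
  shows "frequent_visit_set T F j m \<subseteq> frequent_visit_set T G j m"
  unfolding frequent_visit_set_def
proof (intro subsetI CollectI allI impI)
  fix y N assume "y \<in> {y. \<forall>N\<ge>m. real N \<le> real (Suc j) * real (card (visits T y F N))}" "m \<le> N"
  then have "real N \<le> real (Suc j) * real (card (visits T y F N))"
    by simp
  also have "\<dots> \<le> real (Suc j) * real (card (visits T y G N))"
    using assms by (intro mult_left_mono of_nat_mono card_mono finite_visits visits_mono) simp_all
  finally show "real N \<le> real (Suc j) * real (card (visits T y G N))" .
qed

lemma FHC_frequent_visits:
  assumes "x \<in> FHC T" "open V" "V \<noteq> {}"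
  obtains j m where "x \<in> frequent_visit_set T V j m"
proof -
  let ?d = "\<lambda>N::nat. ereal (real (card (visits T x V N)) / real N)"
  have "0 < liminf ?d"
    using assms unfolding FHC_def visits_def by blast
  then obtain r where "0 < r" "ereal r < liminf ?d"
    using ereal_dense2 by force
  moreover obtain j where "inverse (real (Suc j)) < r"
    using reals_Archimedean[OF \<open>0 < r\<close>] by blast
  ultimately have "ereal (1 / real (Suc j)) < liminf ?d"
    by (simp add: inverse_eq_divide order.strict_trans[of _ "ereal r"])
  then have "eventually (\<lambda>N. ereal (1 / real (Suc j)) < ?d N) sequentially"
    by (rule less_LiminfD)
  then obtain m where m: "\<And>N. m \<le> N \<Longrightarrow> ereal (1 / real (Suc j)) < ?d N"
    unfolding eventually_sequentially by blast
  have "real N \<le> real (Suc j) * real (card (visits T x V N))" if "m \<le> N" for N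
  proof -
    have "1 / real (Suc j) < real (card (visits T x V N)) / real N"
      using m[OF that] by simp
    moreover from this have "0 < N"
      by (cases N) auto
    ultimately show ?thesis
      by (simp add: divide_less_eq less_divide_eq mult.commute)
  qed
  then have "x \<in> frequent_visit_set T V j m"
    by (simp add: frequent_visit_set_def)
  then show thesis
    by (rule that)
qed

lemma FHC_subset_frequent_visit_sets:
  assumes "open V" "V \<noteq> {}" "V \<subseteq> F"
  shows "FHC T \<subseteq> (\<Union>(j, m). frequent_visit_set T F j m)"
proof
  fix y assume "y \<in> FHC T"
  obtain j m where "y \<in> frequent_visit_set T V j m"
    using FHC_frequent_visits[OF \<open>y \<in> FHC T\<close> assms(1,2)] .
  then have "y \<in> frequent_visit_set T F j m"
    using frequent_visit_set_mono[OF assms(3)] by blast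
  then show "y \<in> (\<Union>(j, m). frequent_visit_set T F j m)"
    by auto
qed

lemma FHC_orbit_meets_open:
  assumes "x \<in> FHC T" "open U" "U \<noteq> {}"
  obtains n where "(T ^^ n) x \<in> U"
proof -
  obtain j m where "x \<in> frequent_visit_set T U j m"
    using FHC_frequent_visits[OF assms] .
  then have "real (Suc m) \<le> real (Suc j) * real (card (visits T x U (Suc m)))"
    unfolding frequent_visit_set_def by (auto dest: spec[of _ "Suc m"])
  then have "visits T x U (Suc m) \<noteq> {}"
    by auto
  then show thesis
    using that by (auto simp: visits_def)
qed

text \<open>\<open>cball a (1/3)\<close> only contains vectors of norm between \<open>2/3\<close> and \<open>4/3\<close>.\<close>
lemma scaleR_in_cball_third_unique:
  fixes a v :: "'a::real_normed_vector"
  assumes "norm a = 1" "0 \<le> s" "3 * s \<le> t"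
    and "s *\<^sub>R v \<in> cball a (1/3)" "t *\<^sub>R v \<in> cball a (1/3)"
  shows False
proof -
  have "2/3 \<le> s * norm v"
    using assms(1,2,4) norm_triangle_sub[of a "s *\<^sub>R v"] by (simp add: dist_norm)
  moreover have "t * norm v \<le> 4/3"
    using assms(1-3,5) norm_triangle_sub[of "t *\<^sub>R v" a]
    by (simp add: dist_norm norm_minus_commute)
  moreover have "3 * (s * norm v) \<le> t * norm v"
    using mult_right_mono[OF assms(3) norm_ge_zero] by (simp add: mult.assoc)
  ultimately show False
    by linarith
qed

lemma visits_scaleR_pow3_disjoint:
  fixes T :: "'a::real_normed_vector \<Rightarrow> 'a"
  assumes "bounded_linear T" "norm a = 1" "i \<noteq> l"
  shows "visits T ((3::real) ^ i *\<^sub>R x) (cball a (1/3)) N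
       \<inter> visits T ((3::real) ^ l *\<^sub>R x) (cball a (1/3)) N = {}"
proof -
  have "False" if "(3::real) ^ i *\<^sub>R (T ^^ n) x \<in> cball a (1/3)"
    "(3::real) ^ l *\<^sub>R (T ^^ n) x \<in> cball a (1/3)" "i < l" for i l n
  proof -
    have "3 * (3::real) ^ i \<le> 3 ^ l"
      using power_increasing[of "Suc i" l "3::real"] \<open>i < l\<close> by simp
    then show False
      using scaleR_in_cball_third_unique[OF assms(2), of "3 ^ i" "3 ^ l" "(T ^^ n) x"] that
      by simp
  qed
  then show ?thesis
    using assms(3) by (auto simp: visits_def funpow_scaleR[OF assms(1)] neq_iff)
qed

text \<open>The orbits of \<open>3^i x\<close>, \<open>i < 2 (j + 1)\<close>, visit \<open>cball a (1/3)\<close> at pairwise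
  disjoint times, so they cannot all do so with frequency \<open>1 / (j + 1)\<close>; a delay of
  \<open>k i\<close> steps before entering the set costs at most \<open>k i\<close> visits.\<close>
lemma scaled_orbit_points_not_all_frequent:
  fixes T :: "'a::real_normed_vector \<Rightarrow> 'a"
  assumes T: "bounded_linear T" and a: "norm a = 1"
  shows "\<not> (\<forall>i < 2 * Suc j.
           (T ^^ k i) ((3::real) ^ i *\<^sub>R x) \<in> frequent_visit_set T (cball a (1/3)) j m)"
proof
  define K where "K = 2 * Suc j"
  assume "\<forall>i < 2 * Suc j.
    (T ^^ k i) ((3::real) ^ i *\<^sub>R x) \<in> frequent_visit_set T (cball a (1/3)) j m"
  then have freq: "(T ^^ k i) ((3::real) ^ i *\<^sub>R x) \<in> frequent_visit_set T (cball a (1/3)) j m"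
    if "i < K" for i
    using that by (simp add: K_def)
  define d where "d = (\<Sum>i<K. k i)"
  define N where "N = m + d + 1"
  define H where "H i = visits T ((3::real) ^ i *\<^sub>R x) (cball a (1/3)) (N + d)" for i
  have "m \<le> N"
    by (simp add: N_def)
  have k_le_d: "k i \<le> d" if "i < K" for i
    unfolding d_def using that by (intro member_le_sum) auto
  have H_large: "real N \<le> real (Suc j) * real (card (H i))" if "i < K" for i
  proof -
    have "real N \<le> real (Suc j) *
        real (card (visits T ((T ^^ k i) ((3::real) ^ i *\<^sub>R x)) (cball a (1/3)) N))"
      using freq[OF that] \<open>m \<le> N\<close> unfolding frequent_visit_set_def by blast
    also have "\<dots> \<le> real (Suc j) * real (card (H i))"
      unfolding H_def using that
      by (intro mult_left_mono of_nat_mono card_visits_funpow_le) (simp_all add: k_le_d)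
    finally show ?thesis .
  qed
  have H_total: "(\<Sum>i<K. card (H i)) \<le> card {1..N + d}"
    unfolding H_def
    by (rule sum_card_disjoint_le[OF finite_atLeastAtMost visits_subset finite_lessThan
          visits_scaleR_pow3_disjoint[OF T a]])
  have "real (Suc j) * (2 * real N) = (\<Sum>i<K. real N)"
    by (simp add: K_def)
  also have "\<dots> \<le> (\<Sum>i<K. real (Suc j) * real (card (H i)))"
    by (intro sum_mono H_large) simp
  also have "\<dots> = real (Suc j) * real (\<Sum>i<K. card (H i))"
    by (simp add: sum_distrib_left)
  also have "\<dots> \<le> real (Suc j) * real (N + d)"
    using H_total by (intro mult_left_mono of_nat_mono) simp_all
  finally have "2 * real N \<le> real (N + d)"
    by (rule mult_left_le_imp_le) simp
  then show False
    by (simp add: N_def)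
qed

lemma interior_frequent_visit_set_empty:
  fixes T :: "'a::real_normed_vector \<Rightarrow> 'a"
  assumes T: "bounded_linear T" and a: "norm a = 1" and x: "x \<in> FHC T"
  shows "interior (frequent_visit_set T (cball a (1/3)) j m) = {}"
proof (rule ccontr)
  assume "interior (frequent_visit_set T (cball a (1/3)) j m) \<noteq> {}"
  then obtain W z where W: "open W" "z \<in> W" "W \<subseteq> frequent_visit_set T (cball a (1/3)) j m"
    by (metis all_not_in_conv interiorE)
  have "\<exists>k. (T ^^ k) ((3::real) ^ i *\<^sub>R x) \<in> W" for i :: nat
  proof -
    let ?U = "(\<lambda>v. (3::real) ^ i *\<^sub>R v) -` W"
    have "open ?U"
      by (intro open_vimage W(1) continuous_intros)
    moreover have "(1 / 3 ^ i) *\<^sub>R z \<in> ?U"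
      using W(2) by simp
    ultimately obtain k where "(T ^^ k) x \<in> ?U"
      using FHC_orbit_meets_open[OF x] by blast
    then show ?thesis
      by (auto simp: funpow_scaleR[OF T])
  qed
  then obtain k where "\<And>i. (T ^^ k i) ((3::real) ^ i *\<^sub>R x) \<in> W"
    by metis
  with W(3) scaled_orbit_points_not_all_frequent[OF T a] show False
    by blast
qed

theorem proposition4:
  fixes T :: "'a::banach \<Rightarrow> 'a"
  assumes "separable_space (euclidean :: 'a topology)"
    and "\<exists>x::'a. x \<noteq> 0"
    and "bounded_linear T"
  shows "meager (FHC T)"
proof (cases "FHC T = {}")
  case True
  then show ?thesis
    by (intro meagerI[of "{}"]) auto
next
  case False
  then obtain x where x: "x \<in> FHC T"
    by blast
  obtain e :: 'a where "e \<noteq> 0"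
    using assms(2) by blast
  define a where "a = e /\<^sub>R norm e"
  have a: "norm a = 1"
    using \<open>e \<noteq> 0\<close> by (simp add: a_def)
  let ?A = "\<lambda>(j, m). frequent_visit_set T (cball a (1/3)) j m"
  show ?thesis
  proof (rule meagerI[of "range ?A"])
    show "countable (range ?A)"
      by simp
    show "closed A" if "A \<in> range ?A" for A
      using that closed_frequent_visit_set[OF linear_continuous_on[OF assms(3)] closed_cball] by auto
    show "interior A = {}" if "A \<in> range ?A" for A
      using that interior_frequent_visit_set_empty[OF assms(3) a x] by auto
    show "FHC T \<subseteq> \<Union> (range ?A)"
      using FHC_subset_frequent_visit_sets[OF open_ball _ ball_subset_cball, of a "1/3" T] by simp
  qed
qed

end
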